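(* Let $(W,\odot,\mathbb{1})$ be a monoid and let $(M,+,\mathbb{0},\otimes)$ be an $\omega$-continuous (left) $W$-module, with module of weightings $\mathrm{Wt}=M^\Sigma$. For every $W$-wgcl program $C$, the transformer $\mathrm{wp}[\![C]\!]$ is (1) monotone: for all $f,g\in\mathrm{Wt}$, $f\preceq g$ implies $\mathrm{wp}[\![C]\!](f)\preceq\mathrm{wp}[\![C]\!](g)$; (2) strict: $\mathrm{wp}[\![C]\!](\mathbb{0})=\mathbb{0}$; (3) additive: for all $f,g\in\mathrm{Wt}$, $\mathrm{wp}[\![C]\!](f+g)=\mathrm{wp}[\![C]\!](f)+\mathrm{wp}[\![C]\!](g)$; (4) if moreover the monoid $W$ is commutative, then $\mathrm{wp}$ is homogeneous: for all $a\in W$ and $f\in\mathrm{Wt}$, $\mathrm{wp}[\![C]\!](a\otimes f)=a\otimes\mathrm{wp}[\![C]\!](f)$ (so that, together with (3), $\mathrm{wp}[\![C]\!]$ is linear).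
   Context: A (left) module over a monoid $(W,\odot,\mathbb{1})$ is a commutative monoid $(M,+,\mathbb{0})$ with an action $\otimes\colon W\times M\to M$ such that $(v\odot w)\otimes a=v\otimes(w\otimes a)$, $v\otimes(a+b)=(v\otimes a)+(v\otimes b)$, $\mathbb{1}\otimes a=a$ and $v\otimes\mathbb{0}=\mathbb{0}$ for all $v,w\in W$, $a,b\in M$. The natural order on $M$ is $a\preceq b$ iff there is $c\in M$ with $a+c=b$; $M$ is naturally ordered if $\preceq$ is a partial order. $M$ is $\omega$-continuous if it is naturally ordered, every increasing $\omega$-chain in $(M,\preceq)$ has a supremum, and addition (in each argument) and, for each fixed $w\in W$, the map $a\mapsto w\otimes a$ preserve suprema of increasing $\omega$-chains. Program states: $\Sigma$ is the set of states (maps from program variables to values); an expression $E$ has value $E(\sigma)$ in state $\sigma$; guards $\varphi$ are predicates on states; $\sigma[x\mapsto v]$ is $\sigma$ with $x$ updated to $v$. $W$-wgcl programs are generated by $C::= x:=E \mid C;C \mid \mathtt{if}(\varphi)\{C\}\mathtt{else}\{C\} \mid \{C\}\oplus\{C\} \mid \mathtt{weight}\ a\ (a\in W) \mid \mathtt{while}(\varphi)\{C\}$. Weightings: $\mathrm{Wt}=M^{\Sigma}$ with pointwise addition, zero $\mathbb{0}$, scalar multiplication $(a\otimes f)(\sigma)=a\otimes f(\sigma)$ and pointwise natural order $\preceq$. $([\varphi]\cdot f)(\sigma)=f(\sigma)$ if $\sigma\models\varphi$ and $\mathbb{0}$ otherwise; $f[x/E](\sigma)=f(\sigma[x\mapsto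 E(\sigma)])$. The weakest preweighting transformer: $\mathrm{wp}[\![x:=E]\!](f)=f[x/E]$; $\mathrm{wp}[\![C_1;C_2]\!](f)=\mathrm{wp}[\![C_1]\!](\mathrm{wp}[\![C_2]\!](f))$; $\mathrm{wp}[\![\mathtt{if}(\varphi)\{C_1\}\mathtt{else}\{C_2\}]\!](f)=[\varphi]\cdot\mathrm{wp}[\![C_1]\!](f)+[\neg\varphi]\cdot\mathrm{wp}[\![C_2]\!](f)$; $\mathrm{wp}[\![\{C_1\}\oplus\{C_2\}]\!](f)=\mathrm{wp}[\![C_1]\!](f)+\mathrm{wp}[\![C_2]\!](f)$; $\mathrm{wp}[\![\mathtt{weight}\ a]\!](f)=a\otimes f$; $\mathrm{wp}[\![\mathtt{while}(\varphi)\{C'\}]\!](f)$ is the least fixed point (w.r.t. $\preceq$) of $X\mapsto[\neg\varphi]\cdot f+[\varphi]\cdot\mathrm{wp}[\![C']\!](X)$. *)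

theory Defs
  imports Main
begin

definition nat_le :: "'m::comm_monoid_add \<Rightarrow> 'm \<Rightarrow> bool" where
  "nat_le a b \<longleftrightarrow> (\<exists>c. a + c = b)"

definition is_module :: "('w::monoid_mult \<Rightarrow> 'm::comm_monoid_add \<Rightarrow> 'm) \<Rightarrow> bool" where
  "is_module act \<longleftrightarrow>
     (\<forall>(v::'w) w (a::'m). act (v * w) a = act v (act w a)) \<and>
     (\<forall>(v::'w) (a::'m) b. act v (a + b) = act v a + act v b) \<and>
     (\<forall>a::'m. act 1 a = a) \<and>
     (\<forall>v::'w. act v 0 = 0)"

definition naturally_ordered :: "'m::comm_monoid_add itself \<Rightarrow> bool" where
  "naturally_ordered _ \<longleftrightarrow> (\<forall>a b::'m. nat_le a b \<and> nat_le b a \<longrightarrow> a = b)"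
  \<comment> \<open>reflexivity and transitivity of nat_le always hold; partial order = antisymmetry\<close>

definition omega_chain :: "(nat \<Rightarrow> 'm::comm_monoid_add) \<Rightarrow> bool" where
  "omega_chain c \<longleftrightarrow> (\<forall>n. nat_le (c n) (c (Suc n)))"

definition is_sup :: "(nat \<Rightarrow> 'm::comm_monoid_add) \<Rightarrow> 'm \<Rightarrow> bool" where
  "is_sup c s \<longleftrightarrow> (\<forall>n. nat_le (c n) s) \<and> (\<forall>u. (\<forall>n. nat_le (c n) u) \<longrightarrow> nat_le s u)"

definition omega_cont_module :: "('w::monoid_mult \<Rightarrow> 'm::comm_monoid_add \<Rightarrow> 'm) \<Rightarrow> bool" where
  "omega_cont_module act \<longleftrightarrow>
     is_module act \<and>
     naturally_ordered TYPE('m) \<and>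
     (\<forall>c::nat \<Rightarrow> 'm. omega_chain c \<longrightarrow> (\<exists>s. is_sup c s)) \<and>
     (\<forall>(c::nat \<Rightarrow> 'm) s a. omega_chain c \<longrightarrow> is_sup c s \<longrightarrow> is_sup (\<lambda>n. a + c n) (a + s)) \<and>
     (\<forall>(c::nat \<Rightarrow> 'm) s a. omega_chain c \<longrightarrow> is_sup c s \<longrightarrow> is_sup (\<lambda>n. c n + a) (s + a)) \<and>
     (\<forall>(c::nat \<Rightarrow> 'm) s w. omega_chain c \<longrightarrow> is_sup c s \<longrightarrow> is_sup (\<lambda>n. act w (c n)) (act w s))"

text \<open>States: maps from program variables 'v to values 'a. Expressions are
  functions from states to values, guards are predicates on states.\<close>

datatype ('v, 'a, 'w) wgcl =
    Assign 'v "('v \<Rightarrow> 'a) \<Rightarrow> 'a"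
  | Seq "('v, 'a, 'w) wgcl" "('v, 'a, 'w) wgcl"
  | Ite "('v \<Rightarrow> 'a) \<Rightarrow> bool" "('v, 'a, 'w) wgcl" "('v, 'a, 'w) wgcl"
  | Branch "('v, 'a, 'w) wgcl" "('v, 'a, 'w) wgcl"
  | Weight 'w
  | While "('v \<Rightarrow> 'a) \<Rightarrow> bool" "('v, 'a, 'w) wgcl"

definition wt_le :: "('s \<Rightarrow> 'm::comm_monoid_add) \<Rightarrow> ('s \<Rightarrow> 'm) \<Rightarrow> bool" where
  "wt_le f g \<longleftrightarrow> (\<forall>\<sigma>. nat_le (f \<sigma>) (g \<sigma>))"

definition iv :: "('s \<Rightarrow> bool) \<Rightarrow> ('s \<Rightarrow> 'm::comm_monoid_add) \<Rightarrow> 's \<Rightarrow> 'm" where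
  "iv \<phi> f = (\<lambda>\<sigma>. if \<phi> \<sigma> then f \<sigma> else 0)"

definition wt_lfp :: "(('s \<Rightarrow> 'm::comm_monoid_add) \<Rightarrow> ('s \<Rightarrow> 'm)) \<Rightarrow> ('s \<Rightarrow> 'm)" where
  "wt_lfp \<Phi> = (THE X. \<Phi> X = X \<and> (\<forall>Y. \<Phi> Y = Y \<longrightarrow> wt_le X Y))"

primrec wp :: "('w::monoid_mult \<Rightarrow> 'm::comm_monoid_add \<Rightarrow> 'm) \<Rightarrow> ('v, 'a, 'w) wgcl
               \<Rightarrow> (('v \<Rightarrow> 'a) \<Rightarrow> 'm) \<Rightarrow> (('v \<Rightarrow> 'a) \<Rightarrow> 'm)" where
  "wp act (Assign x E) f = (\<lambda>\<sigma>. f (\<sigma>(x := E \<sigma>)))"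
| "wp act (Seq C1 C2) f = wp act C1 (wp act C2 f)"
| "wp act (Ite \<phi> C1 C2) f =
     (\<lambda>\<sigma>. iv \<phi> (wp act C1 f) \<sigma> + iv (\<lambda>\<tau>. \<not> \<phi> \<tau>) (wp act C2 f) \<sigma>)"
| "wp act (Branch C1 C2) f = (\<lambda>\<sigma>. wp act C1 f \<sigma> + wp act C2 f \<sigma>)"
| "wp act (Weight a) f = (\<lambda>\<sigma>. act a (f \<sigma>))"
| "wp act (While \<phi> C) f =
     wt_lfp (\<lambda>X \<sigma>. iv (\<lambda>\<tau>. \<not> \<phi> \<tau>) f \<sigma> + iv \<phi> (wp act C X) \<sigma>)"

end

theory Submission
  imports Defs "HOL-Library.Function_Algebras"
begin

text \<open>Every transformer wp C is assembled from substitution, guards, the action of a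
  weight, sums, composition, and least fixed points of affine functionals
  X \<mapsto> A f + B X. Weightings again form an \<omega>-continuous module, and each of these
  operations preserves \<omega>-continuity, additivity and strictness, and (when W is
  commutative, so that weights commute with one another) homogeneity. For loops this
  rests on Kleene's theorem: the least fixed point is the supremum of the approximants,
  the approximants inherit each property by induction on their depth, and suprema of
  chains commute with addition, with the action and with each other. Monotonicity is
  a consequence of continuity.\<close>

section \<open>Natural order, chains and suprema\<close>

lemma nat_le_refl: "nat_le a a"
  unfolding nat_le_def by (metis add_0_right)

lemma nat_le_trans: "nat_le a b \<Longrightarrow> nat_le b c \<Longrightarrow> nat_le a c"
  unfolding nat_le_def by (metis add.assoc)

lemma zero_nat_le: "nat_le 0 a"
  unfolding nat_le_def by simp

lemma nat_le_add_mono: "nat_le a b \<Longrightarrow> nat_le c d \<Longrightarrow> nat_le (a + c) (b + d)"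
  unfolding nat_le_def by (metis add.assoc add.left_commute)

lemma omega_chain_mono:
  assumes "omega_chain c" and "n \<le> m"
  shows "nat_le (c n) (c m)"
  using assms(2)
proof (induction m rule: dec_induct)
  case base
  show ?case by (rule nat_le_refl)
next
  case (step m)
  with assms(1) show ?case
    unfolding omega_chain_def by (blast intro: nat_le_trans)
qed

lemma is_sup_upper: "is_sup c s \<Longrightarrow> nat_le (c n) s"
  unfolding is_sup_def by blast

lemma is_sup_least: "is_sup c s \<Longrightarrow> (\<And>n. nat_le (c n) u) \<Longrightarrow> nat_le s u"
  unfolding is_sup_def by blast

lemma is_sup_const: "is_sup (\<lambda>_. a) a"
  unfolding is_sup_def by (simp add: nat_le_refl)

lemma is_sup_Suc: "omega_chain c \<Longrightarrow> is_sup c s \<Longrightarrow> is_sup (\<lambda>n. c (Suc n)) s"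
  unfolding is_sup_def omega_chain_def by (blast intro: nat_le_trans)

lemma is_sup_swap:
  assumes rows: "\<And>n. is_sup (\<lambda>k. a n k) (r n)"
    and cols: "\<And>k. is_sup (\<lambda>n. a n k) (c k)"
    and "is_sup r s"
  shows "is_sup c s"
  unfolding is_sup_def
proof (intro conjI allI impI)
  fix k
  have "nat_le (a n k) s" for n
    using is_sup_upper[OF rows] is_sup_upper[OF \<open>is_sup r s\<close>] by (rule nat_le_trans)
  then show "nat_le (c k) s" by (rule is_sup_least[OF cols])
next
  fix u assume "\<forall>k. nat_le (c k) u"
  then have "nat_le (a n k) u" for n k
    using is_sup_upper[OF cols] nat_le_trans by blast
  then have "nat_le (r n) u" for n by (rule is_sup_least[OF rows])
  then show "nat_le s u" by (rule is_sup_least[OF \<open>is_sup r s\<close>])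
qed

section \<open>Continuous, additive and homogeneous maps\<close>

definition chain_continuous :: "('a::comm_monoid_add \<Rightarrow> 'b::comm_monoid_add) \<Rightarrow> bool" where
  "chain_continuous T \<longleftrightarrow> (\<forall>c s. omega_chain c \<longrightarrow> is_sup c s \<longrightarrow> is_sup (\<lambda>n. T (c n)) (T s))"

lemma chain_continuousD:
  "chain_continuous T \<Longrightarrow> omega_chain c \<Longrightarrow> is_sup c s \<Longrightarrow> is_sup (\<lambda>n. T (c n)) (T s)"
  unfolding chain_continuous_def by blast

lemma chain_continuous_imp_mono:
  assumes "chain_continuous T"
  shows "monotone nat_le nat_le T"
proof
  fix x y :: 'a assume "nat_le x y"
  define c where "c n = (if n = 0 then x else y)" for n :: nat
  have "omega_chain c"
    unfolding omega_chain_def c_def using \<open>nat_le x y\<close> by (simp add: nat_le_refl)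
  moreover have "is_sup c y"
    unfolding is_sup_def c_def using \<open>nat_le x y\<close> by (metis nat_le_refl zero_neq_one)
  ultimately have "is_sup (\<lambda>n. T (c n)) (T y)" by (rule chain_continuousD[OF assms])
  from is_sup_upper[OF this, of 0] show "nat_le (T x) (T y)" by (simp add: c_def)
qed

lemma omega_chain_image:
  "monotone nat_le nat_le T \<Longrightarrow> omega_chain c \<Longrightarrow> omega_chain (\<lambda>n. T (c n))"
  unfolding omega_chain_def by (simp add: monotoneD)

lemma chain_continuous_const: "chain_continuous (\<lambda>_. a)"
  unfolding chain_continuous_def by (simp add: is_sup_const)

lemma chain_continuous_comp:
  assumes "chain_continuous T" and "chain_continuous U"
  shows "chain_continuous (\<lambda>x. T (U x))"
  unfolding chain_continuous_def
  using assms chain_continuousD chain_continuous_imp_mono omega_chain_image by metis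

definition add_hom :: "('a::comm_monoid_add \<Rightarrow> 'b::comm_monoid_add) \<Rightarrow> bool" where
  "add_hom T \<longleftrightarrow> T 0 = 0 \<and> (\<forall>x y. T (x + y) = T x + T y)"

lemma add_hom_comp: "add_hom T \<Longrightarrow> add_hom U \<Longrightarrow> add_hom (\<lambda>x. T (U x))"
  unfolding add_hom_def by simp

lemma add_hom_add: "add_hom T \<Longrightarrow> add_hom U \<Longrightarrow> add_hom (\<lambda>x. T x + U x)"
  unfolding add_hom_def by (simp add: ac_simps)

definition homogeneous :: "('w \<Rightarrow> 'm \<Rightarrow> 'm) \<Rightarrow> ('m \<Rightarrow> 'm) \<Rightarrow> bool" where
  "homogeneous act T \<longleftrightarrow> (\<forall>a x. T (act a x) = act a (T x))"

lemma homogeneous_comp: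
  "homogeneous act T \<Longrightarrow> homogeneous act U \<Longrightarrow> homogeneous act (\<lambda>x. T (U x))"
  unfolding homogeneous_def by simp

section \<open>Least fixed points and their approximants\<close>

definition nat_lfp :: "('m::comm_monoid_add \<Rightarrow> 'm) \<Rightarrow> 'm" where
  "nat_lfp \<Phi> = (THE X. \<Phi> X = X \<and> (\<forall>Y. \<Phi> Y = Y \<longrightarrow> nat_le X Y))"

lemma omega_chain_iterates:
  fixes \<Phi> :: "'m::comm_monoid_add \<Rightarrow> 'm"
  assumes "monotone nat_le nat_le \<Phi>"
  shows "omega_chain (\<lambda>n. (\<Phi> ^^ n) 0)"
  unfolding omega_chain_def
proof
  show "nat_le ((\<Phi> ^^ n) 0) ((\<Phi> ^^ Suc n) 0)" for n
    by (induction n) (auto simp: zero_nat_le intro: monotoneD[OF assms])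
qed

primrec loop_approx :: "('m::comm_monoid_add \<Rightarrow> 'm) \<Rightarrow> ('m \<Rightarrow> 'm) \<Rightarrow> 'm \<Rightarrow> nat \<Rightarrow> 'm" where
  "loop_approx A B f 0 = 0"
| "loop_approx A B f (Suc n) = A f + B (loop_approx A B f n)"

lemma loop_approx_eq_iterates: "loop_approx A B f n = ((\<lambda>X. A f + B X) ^^ n) 0"
  by (induction n) simp_all

lemma loop_approx_mono:
  assumes "monotone nat_le nat_le A" "monotone nat_le nat_le B" and "nat_le f g"
  shows "nat_le (loop_approx A B f n) (loop_approx A B g n)"
  by (induction n) (simp_all add: nat_le_refl nat_le_add_mono monotoneD[OF assms(1)]
      monotoneD[OF assms(2)] assms(3))

lemma omega_chain_loop_approx:
  assumes "monotone nat_le nat_le B"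
  shows "omega_chain (loop_approx A B f)"
  unfolding omega_chain_def
proof
  show "nat_le (loop_approx A B f n) (loop_approx A B f (Suc n))" for n
    by (induction n) (simp_all add: zero_nat_le nat_le_refl nat_le_add_mono monotoneD[OF assms])
qed

section \<open>\<omega>-continuous modules\<close>

locale omega_continuous_module =
  fixes act :: "'w::monoid_mult \<Rightarrow> 'm::comm_monoid_add \<Rightarrow> 'm"
  assumes omega_cont_module: "omega_cont_module act"
begin

lemma act_mult: "act (v * w) a = act v (act w a)"
  and act_add: "act v (a + b) = act v a + act v b"
  and act_one: "act 1 a = a"
  and act_zero: "act v 0 = 0"
  using omega_cont_module unfolding omega_cont_module_def is_module_def by blast+

lemma nat_le_antisym: "nat_le (a::'m) b \<Longrightarrow> nat_le b a \<Longrightarrow> a = b"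
  using omega_cont_module unfolding omega_cont_module_def naturally_ordered_def by blast

lemma omega_chain_has_sup: "omega_chain (c :: nat \<Rightarrow> 'm) \<Longrightarrow> \<exists>s. is_sup c s"
  using omega_cont_module unfolding omega_cont_module_def by blast

lemma is_sup_add_left:
    "omega_chain (c :: nat \<Rightarrow> 'm) \<Longrightarrow> is_sup c s \<Longrightarrow> is_sup (\<lambda>n. a + c n) (a + s)"
  and is_sup_add_right:
    "omega_chain (c :: nat \<Rightarrow> 'm) \<Longrightarrow> is_sup c s \<Longrightarrow> is_sup (\<lambda>n. c n + a) (s + a)"
  and is_sup_act:
    "omega_chain (c :: nat \<Rightarrow> 'm) \<Longrightarrow> is_sup c s \<Longrightarrow> is_sup (\<lambda>n. act v (c n)) (act v s)"
  using omega_cont_module unfolding omega_cont_module_def by blast+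

lemma is_sup_unique: "is_sup c (s::'m) \<Longrightarrow> is_sup c t \<Longrightarrow> s = t"
  by (meson is_sup_least is_sup_upper nat_le_antisym)

text \<open>The two chains are merged along the diagonal: each mixed term c m + d n is
  dominated by the diagonal term at max m n.\<close>
lemma is_sup_add:
  assumes "omega_chain (c :: nat \<Rightarrow> 'm)" "omega_chain d" "is_sup c s" "is_sup d t"
  shows "is_sup (\<lambda>n. c n + d n) (s + t)"
  unfolding is_sup_def
proof (intro conjI allI impI)
  show "nat_le (c n + d n) (s + t)" for n
    using assms(3,4) by (blast intro: nat_le_add_mono is_sup_upper)
next
  fix u assume diag: "\<forall>n. nat_le (c n + d n) u"
  have mixed: "nat_le (c m + d n) u" for m n
    using nat_le_add_mono[OF omega_chain_mono[OF assms(1), of m "max m n"]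
        omega_chain_mono[OF assms(2), of n "max m n"]] diag
    by (simp add: nat_le_trans)
  have "nat_le (c m + t) u" for m
    by (rule is_sup_least[OF is_sup_add_left[OF assms(2,4)] mixed])
  then show "nat_le (s + t) u"
    by (rule is_sup_least[OF is_sup_add_right[OF assms(1,3)]])
qed

lemma chain_continuous_act: "chain_continuous (act v)"
  unfolding chain_continuous_def using is_sup_act by blast

lemma add_hom_act: "add_hom (act v)"
  unfolding add_hom_def by (simp add: act_zero act_add)

lemma homogeneous_act:
  assumes "\<forall>v w :: 'w. v * w = w * v"
  shows "homogeneous act (act b)"
  unfolding homogeneous_def using assms by (metis act_mult)

lemma chain_continuous_add:
  assumes "chain_continuous (T :: 'a::comm_monoid_add \<Rightarrow> 'm)" "chain_continuous U"
  shows "chain_continuous (\<lambda>x. T x + U x)"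
  unfolding chain_continuous_def
  using assms chain_continuousD chain_continuous_imp_mono omega_chain_image is_sup_add
  by metis

lemma homogeneous_add:
  "homogeneous act T \<Longrightarrow> homogeneous act U \<Longrightarrow> homogeneous act (\<lambda>x. T x + U x)"
  unfolding homogeneous_def by (simp add: act_add)

lemma nat_lfp_is_sup_iterates:
  fixes \<Phi> :: "'m \<Rightarrow> 'm"
  assumes cont: "chain_continuous \<Phi>"
  shows "is_sup (\<lambda>n. (\<Phi> ^^ n) 0) (nat_lfp \<Phi>)"
proof -
  let ?K = "\<lambda>n. (\<Phi> ^^ n) 0"
  have mono: "monotone nat_le nat_le \<Phi>" by (rule chain_continuous_imp_mono[OF cont])
  have chain: "omega_chain ?K" by (rule omega_chain_iterates[OF mono])
  obtain s where s: "is_sup ?K s" using omega_chain_has_sup[OF chain] by blast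
  have "is_sup (\<lambda>n. \<Phi> (?K n)) (\<Phi> s)" by (rule chain_continuousD[OF cont chain s])
  moreover have "is_sup (\<lambda>n. \<Phi> (?K n)) s" using is_sup_Suc[OF chain s] by simp
  ultimately have fixed: "\<Phi> s = s" by (rule is_sup_unique)
  have least: "nat_le s Y" if "\<Phi> Y = Y" for Y
  proof (rule is_sup_least[OF s])
    show "nat_le (?K n) Y" for n
      by (induction n)
        (auto simp: zero_nat_le intro: monotoneD[OF mono, of _ Y, simplified that])
  qed
  have "nat_lfp \<Phi> = s"
    unfolding nat_lfp_def
    by (rule the_equality) (use fixed least nat_le_antisym in blast)+
  with s show ?thesis by simp
qed

lemma is_sup_loop_approx:
  fixes A B :: "'m \<Rightarrow> 'm"
  assumes "chain_continuous B"
  shows "is_sup (loop_approx A B f) (nat_lfp (\<lambda>X. A f + B X))"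
  using nat_lfp_is_sup_iterates[OF chain_continuous_add[OF chain_continuous_const assms]]
  by (simp add: loop_approx_eq_iterates[abs_def])

text \<open>Continuity of the least fixed point in the parameter f is an exchange of two
  suprema: over the approximation depth n and along the chain of parameters.\<close>
lemma chain_continuous_lfp_affine:
  fixes A B :: "'m \<Rightarrow> 'm"
  assumes A: "chain_continuous A" and B: "chain_continuous B"
  shows "chain_continuous (\<lambda>f. nat_lfp (\<lambda>X. A f + B X))"
  unfolding chain_continuous_def
proof (intro allI impI)
  fix c :: "nat \<Rightarrow> 'm" and s assume c: "omega_chain c" and s: "is_sup c s"
  have monoA: "monotone nat_le nat_le A" and monoB: "monotone nat_le nat_le B"
    using A B by (simp_all add: chain_continuous_imp_mono)
  have approx_chain: "omega_chain (\<lambda>k. loop_approx A B (c k) n)" for n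
    using c unfolding omega_chain_def by (simp add: loop_approx_mono[OF monoA monoB])
  have "is_sup (\<lambda>k. loop_approx A B (c k) n) (loop_approx A B s n)" for n
  proof (induction n)
    case 0
    show ?case by (simp add: is_sup_const)
  next
    case (Suc n)
    show ?case
      using is_sup_add[OF omega_chain_image[OF monoA c]
          omega_chain_image[OF monoB approx_chain[of n]]
          chain_continuousD[OF A c s] chain_continuousD[OF B approx_chain Suc]]
      by simp
  qed
  then show "is_sup (\<lambda>k. nat_lfp (\<lambda>X. A (c k) + B X)) (nat_lfp (\<lambda>X. A s + B X))"
    by (rule is_sup_swap[OF _ is_sup_loop_approx[OF B] is_sup_loop_approx[OF B]])
qed

lemma add_hom_lfp_affine:
  fixes A B :: "'m \<Rightarrow> 'm"
  assumes "chain_continuous B" and "add_hom A" "add_hom B"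
  shows "add_hom (\<lambda>f. nat_lfp (\<lambda>X. A f + B X))"
proof -
  have monoB: "monotone nat_le nat_le B"
    using assms(1) by (rule chain_continuous_imp_mono)
  have "loop_approx A B 0 = (\<lambda>_. 0)"
  proof
    show "loop_approx A B 0 n = 0" for n
      using assms(2,3) by (induction n) (simp_all add: add_hom_def)
  qed
  then have "is_sup (loop_approx A B 0) 0"
    by (simp add: is_sup_const)
  moreover have "loop_approx A B (f + g) = (\<lambda>n. loop_approx A B f n + loop_approx A B g n)"
    for f g
  proof
    show "loop_approx A B (f + g) n = loop_approx A B f n + loop_approx A B g n" for n
      using assms(2,3) by (induction n) (simp_all add: add_hom_def ac_simps)
  qed
  then have "is_sup (loop_approx A B (f + g))
      (nat_lfp (\<lambda>X. A f + B X) + nat_lfp (\<lambda>X. A g + B X))" for f g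
    using is_sup_add[OF omega_chain_loop_approx[OF monoB] omega_chain_loop_approx[OF monoB]
        is_sup_loop_approx[OF assms(1)] is_sup_loop_approx[OF assms(1)]]
    by simp
  ultimately show ?thesis
    unfolding add_hom_def using is_sup_loop_approx[OF assms(1)] is_sup_unique by blast
qed

lemma homogeneous_lfp_affine:
  fixes A B :: "'m \<Rightarrow> 'm"
  assumes "chain_continuous B" and "homogeneous act A" "homogeneous act B"
  shows "homogeneous act (\<lambda>f. nat_lfp (\<lambda>X. A f + B X))"
proof -
  have monoB: "monotone nat_le nat_le B"
    using assms(1) by (rule chain_continuous_imp_mono)
  have "loop_approx A B (act a f) = (\<lambda>n. act a (loop_approx A B f n))" for a f
  proof
    show "loop_approx A B (act a f) n = act a (loop_approx A B f n)" for n
      using assms(2,3) by (induction n) (simp_all add: homogeneous_def act_zero act_add)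
  qed
  then have "is_sup (loop_approx A B (act a f)) (act a (nat_lfp (\<lambda>X. A f + B X)))" for a f
    using is_sup_act[OF omega_chain_loop_approx[OF monoB] is_sup_loop_approx[OF assms(1)]]
    by simp
  then show ?thesis
    unfolding homogeneous_def using is_sup_loop_approx[OF assms(1)] is_sup_unique by blast
qed

end

section \<open>Weightings\<close>

lemma wt_le_eq_nat_le: "wt_le = nat_le"
proof (intro ext iffI)
  fix f g :: "'s \<Rightarrow> 'm::comm_monoid_add"
  assume "wt_le f g"
  then obtain c where "\<forall>\<sigma>. f \<sigma> + c \<sigma> = g \<sigma>"
    unfolding wt_le_def nat_le_def by metis
  then have "f + c = g" by (simp add: fun_eq_iff)
  then show "nat_le f g" unfolding nat_le_def by blast
next
  fix f g :: "'s \<Rightarrow> 'm::comm_monoid_add"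
  assume "nat_le f g"
  then show "wt_le f g" unfolding wt_le_def nat_le_def by (metis plus_fun_apply)
qed

lemma wt_lfp_eq_nat_lfp: "wt_lfp = nat_lfp"
  unfolding wt_lfp_def[abs_def] nat_lfp_def[abs_def] wt_le_eq_nat_le ..

lemma omega_chain_fun_iff: "omega_chain F \<longleftrightarrow> (\<forall>\<sigma>. omega_chain (\<lambda>n. F n \<sigma>))"
  unfolding omega_chain_def wt_le_eq_nat_le[symmetric] wt_le_def by blast

lemma is_sup_fun_iff: "is_sup F S \<longleftrightarrow> (\<forall>\<sigma>. is_sup (\<lambda>n. F n \<sigma>) (S \<sigma>))"
proof
  assume sup: "is_sup F S"
  show "\<forall>\<sigma>. is_sup (\<lambda>n. F n \<sigma>) (S \<sigma>)"
  proof (intro allI, unfold is_sup_def, intro conjI allI impI)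
    fix \<sigma> n
    show "nat_le (F n \<sigma>) (S \<sigma>)"
      using is_sup_upper[OF sup] unfolding wt_le_eq_nat_le[symmetric] wt_le_def by blast
  next
    fix \<sigma> u assume "\<forall>n. nat_le (F n \<sigma>) u"
    \<comment> \<open>Raising S to u at \<sigma> alone gives an upper bound of the chain of weightings.\<close>
    then have "nat_le (F n) (S(\<sigma> := u))" for n
      using is_sup_upper[OF sup] unfolding wt_le_eq_nat_le[symmetric] wt_le_def by simp
    then have "nat_le S (S(\<sigma> := u))" by (rule is_sup_least[OF sup])
    then show "nat_le (S \<sigma>) u"
      unfolding wt_le_eq_nat_le[symmetric] wt_le_def by (metis fun_upd_same)
  qed
next
  assume "\<forall>\<sigma>. is_sup (\<lambda>n. F n \<sigma>) (S \<sigma>)"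
  then show "is_sup F S"
    unfolding is_sup_def wt_le_eq_nat_le[symmetric] wt_le_def by blast
qed

definition wt_act :: "('w \<Rightarrow> 'm \<Rightarrow> 'm) \<Rightarrow> 'w \<Rightarrow> ('s \<Rightarrow> 'm) \<Rightarrow> ('s \<Rightarrow> 'm)" where
  "wt_act act a f = (\<lambda>\<sigma>. act a (f \<sigma>))"

lemma (in omega_continuous_module) omega_continuous_module_wt_act:
  "omega_continuous_module (wt_act act)"
proof
  show "omega_cont_module (wt_act act)"
    unfolding omega_cont_module_def
  proof (intro conjI allI impI)
    show "is_module (wt_act act)"
      unfolding is_module_def wt_act_def
      by (simp add: fun_eq_iff act_mult act_add act_one act_zero)
    show "naturally_ordered TYPE('s \<Rightarrow> 'm)"
      unfolding naturally_ordered_def wt_le_eq_nat_le[symmetric] wt_le_def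
      by (blast intro: ext nat_le_antisym)
  next
    fix c :: "nat \<Rightarrow> 's \<Rightarrow> 'm" assume "omega_chain c"
    then have "\<forall>\<sigma>. \<exists>s. is_sup (\<lambda>n. c n \<sigma>) s"
      unfolding omega_chain_fun_iff by (blast intro: omega_chain_has_sup)
    then show "\<exists>s. is_sup c s"
      unfolding is_sup_fun_iff by metis
  qed (simp_all add: omega_chain_fun_iff is_sup_fun_iff wt_act_def
        is_sup_add_left is_sup_add_right is_sup_act)
qed

lemma chain_continuous_comp_right: "chain_continuous (\<lambda>f. f \<circ> u)"
  unfolding chain_continuous_def omega_chain_fun_iff is_sup_fun_iff by simp

lemma add_hom_comp_right: "add_hom (\<lambda>f. f \<circ> u)"
  unfolding add_hom_def by (simp add: fun_eq_iff)

lemma homogeneous_comp_right: "homogeneous (wt_act act) (\<lambda>f. f \<circ> u)"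
  unfolding homogeneous_def wt_act_def by (simp add: fun_eq_iff)

lemma chain_continuous_iv: "chain_continuous (iv \<phi>)"
  unfolding chain_continuous_def is_sup_fun_iff iv_def by (simp add: is_sup_const)

lemma add_hom_iv: "add_hom (iv \<phi>)"
  unfolding add_hom_def iv_def by (simp add: fun_eq_iff)

lemma (in omega_continuous_module) homogeneous_iv: "homogeneous (wt_act act) (iv \<phi>)"
  unfolding homogeneous_def wt_act_def iv_def by (simp add: fun_eq_iff act_zero)

section \<open>Weakest preweightings\<close>

lemma wp_eqs:
  "wp act (Assign x E) = (\<lambda>f. f \<circ> (\<lambda>\<sigma>. \<sigma>(x := E \<sigma>)))"
  "wp act (Seq C\<^sub>1 C\<^sub>2) = (\<lambda>f. wp act C\<^sub>1 (wp act C\<^sub>2 f))"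
  "wp act (Ite \<phi> C\<^sub>1 C\<^sub>2) =
    (\<lambda>f. iv \<phi> (wp act C\<^sub>1 f) + iv (\<lambda>\<sigma>. \<not> \<phi> \<sigma>) (wp act C\<^sub>2 f))"
  "wp act (Branch C\<^sub>1 C\<^sub>2) = (\<lambda>f. wp act C\<^sub>1 f + wp act C\<^sub>2 f)"
  "wp act (Weight a) = wt_act act a"
  "wp act (While \<phi> C) =
    (\<lambda>f. nat_lfp (\<lambda>X. iv (\<lambda>\<sigma>. \<not> \<phi> \<sigma>) f + iv \<phi> (wp act C X)))"
  by (simp_all add: fun_eq_iff wt_act_def wt_lfp_eq_nat_lfp plus_fun_def)

context omega_continuous_module
begin

interpretation wt: omega_continuous_module "wt_act act :: 'w \<Rightarrow> ('s \<Rightarrow> 'm) \<Rightarrow> ('s \<Rightarrow> 'm)"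
  by (rule omega_continuous_module_wt_act)

lemma chain_continuous_wp: "chain_continuous (wp act C)"
proof (induction C)
  case (Assign x E)
  show ?case unfolding wp_eqs by (rule chain_continuous_comp_right)
next
  case (Seq C\<^sub>1 C\<^sub>2)
  then show ?case unfolding wp_eqs by (rule chain_continuous_comp)
next
  case (Ite \<phi> C\<^sub>1 C\<^sub>2)
  then show ?case unfolding wp_eqs
    by (intro wt.chain_continuous_add chain_continuous_comp[OF chain_continuous_iv])
next
  case (Branch C\<^sub>1 C\<^sub>2)
  then show ?case unfolding wp_eqs by (rule wt.chain_continuous_add)
next
  case (Weight a)
  show ?case unfolding wp_eqs by (rule wt.chain_continuous_act)
next
  case (While \<phi> C)
  then show ?case unfolding wp_eqs
    by (intro wt.chain_continuous_lfp_affine chain_continuous_iv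
        chain_continuous_comp[OF chain_continuous_iv])
qed

lemma add_hom_wp: "add_hom (wp act C)"
proof (induction C)
  case (Assign x E)
  show ?case unfolding wp_eqs by (rule add_hom_comp_right)
next
  case (Seq C\<^sub>1 C\<^sub>2)
  then show ?case unfolding wp_eqs by (rule add_hom_comp)
next
  case (Ite \<phi> C\<^sub>1 C\<^sub>2)
  then show ?case unfolding wp_eqs by (intro add_hom_add add_hom_comp[OF add_hom_iv])
next
  case (Branch C\<^sub>1 C\<^sub>2)
  then show ?case unfolding wp_eqs by (rule add_hom_add)
next
  case (Weight a)
  show ?case unfolding wp_eqs by (rule wt.add_hom_act)
next
  case (While \<phi> C)
  then show ?case unfolding wp_eqs
    by (intro wt.add_hom_lfp_affine add_hom_iv add_hom_comp[OF add_hom_iv]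
        chain_continuous_comp[OF chain_continuous_iv chain_continuous_wp])
qed

lemma homogeneous_wp:
  assumes "\<forall>v w :: 'w. v * w = w * v"
  shows "homogeneous (wt_act act) (wp act C)"
proof (induction C)
  case (Assign x E)
  show ?case unfolding wp_eqs by (rule homogeneous_comp_right)
next
  case (Seq C\<^sub>1 C\<^sub>2)
  then show ?case unfolding wp_eqs by (rule homogeneous_comp)
next
  case (Ite \<phi> C\<^sub>1 C\<^sub>2)
  then show ?case unfolding wp_eqs
    by (intro wt.homogeneous_add homogeneous_comp[OF homogeneous_iv])
next
  case (Branch C\<^sub>1 C\<^sub>2)
  then show ?case unfolding wp_eqs by (rule wt.homogeneous_add)
next
  case (Weight a)
  show ?case unfolding wp_eqs by (rule wt.homogeneous_act[OF assms])
next
  case (While \<phi> C)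
  then show ?case unfolding wp_eqs
    by (intro wt.homogeneous_lfp_affine homogeneous_iv homogeneous_comp[OF homogeneous_iv]
        chain_continuous_comp[OF chain_continuous_iv chain_continuous_wp])
qed

end

theorem mainTheorem2:
  fixes act :: "'w::monoid_mult \<Rightarrow> 'm::comm_monoid_add \<Rightarrow> 'm"
    and C :: "('v, 'a, 'w) wgcl"
  assumes "omega_cont_module act"
  shows "(\<forall>f g. wt_le f g \<longrightarrow> wt_le (wp act C f) (wp act C g))
       \<and> wp act C (\<lambda>_. 0) = (\<lambda>_. 0)
       \<and> (\<forall>f g. wp act C (\<lambda>\<sigma>. f \<sigma> + g \<sigma>) = (\<lambda>\<sigma>. wp act C f \<sigma> + wp act C g \<sigma>))
       \<and> ((\<forall>v w :: 'w. v * w = w * v) \<longrightarrow>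
            (\<forall>a f. wp act C (\<lambda>\<sigma>. act a (f \<sigma>)) = (\<lambda>\<sigma>. act a (wp act C f \<sigma>))))"
proof -
  interpret omega_continuous_module act by (rule omega_continuous_module.intro) (fact assms)
  have "monotone nat_le nat_le (wp act C)"
    by (rule chain_continuous_imp_mono[OF chain_continuous_wp])
  moreover have "add_hom (wp act C)" by (rule add_hom_wp)
  moreover have "homogeneous (wt_act act) (wp act C)" if "\<forall>v w :: 'w. v * w = w * v"
    using that by (rule homogeneous_wp)
  ultimately show ?thesis
    unfolding wt_le_eq_nat_le add_hom_def homogeneous_def wt_act_def monotone_on_def
      plus_fun_def zero_fun_def
    by blast
qed

end
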